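(* Let $\alpha,\beta,\sigma>0$ and let $X\sim\mathcal{N}(\alpha,\sigma^2)$. Then $$\mathbb{E}\left[\tanh\left(\frac{\beta X}{\sigma^2}\right)\right]\ge 1-\exp\left(-\frac{\min(\alpha,\beta)\cdot\alpha}{2\sigma^2}\right).$$ *)

theory Defs
  imports "HOL-Probability.Probability"
begin

end

theory Submission imports Defs begin

text \<open>
  Let \<open>\<phi>\<close> be the density of \<open>N(\<alpha>, \<sigma>\<^sup>2)\<close> and \<open>c = \<beta> / \<sigma>\<^sup>2\<close>, so that
  \<open>1 - E[tanh (c X)] = \<integral> \<phi>(x) (1 - tanh (c x)) dx\<close>. If \<open>\<beta> \<le> \<alpha>\<close>, bound \<open>1 - tanh t \<le> exp (- t)\<close>
  and evaluate the Gaussian moment generating function. If \<open>\<beta> > \<alpha>\<close>, pair \<open>x\<close> with \<open>- x\<close>: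
  \<open>\<phi>(- x) = \<phi>(x) exp (- 2 r x)\<close> with \<open>r = \<alpha> / \<sigma>\<^sup>2 \<le> 2 c\<close>, so \<open>a = exp (- r x)\<close> lies between
  \<open>1\<close> and \<open>exp (- 2 c x)\<close>, which gives \<open>(1 - tanh (c x)) + a\<^sup>2 (1 + tanh (c x)) \<le> 2 a\<close>.
  Integrating, twice the defect is at most \<open>2 exp (- \<alpha>\<^sup>2 / (2 \<sigma>\<^sup>2))\<close>.
\<close>

lemma one_minus_tanh_real: "1 - tanh (t::real) = 2 * exp (- 2 * t) / (1 + exp (- 2 * t))"
  and one_plus_tanh_real: "1 + tanh (t::real) = 2 / (1 + exp (- 2 * t))"
proof -
  have "1 + exp (- 2 * t) > 0" by (simp add: add_pos_pos)
  then show "1 - tanh t = 2 * exp (- 2 * t) / (1 + exp (- 2 * t))"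
    and "1 + tanh t = 2 / (1 + exp (- 2 * t))"
    unfolding tanh_real_altdef by (simp_all add: field_simps)
qed

lemma one_minus_tanh_le_exp: "1 - tanh (t::real) \<le> exp (- t)"
proof -
  define v where "v = exp (- t)"
  have v: "v > 0" "exp (- 2 * t) = v\<^sup>2"
    by (simp_all add: v_def power2_eq_square exp_add[symmetric])
  have "2 * v \<le> 1 + v\<^sup>2"
    using zero_le_power2[of "v - 1"] by (simp add: power2_diff)
  then have "v * (2 * v) \<le> v * (1 + v\<^sup>2)"
    using v(1) by (rule mult_left_mono[OF _ less_imp_le])
  with v show ?thesis
    unfolding one_minus_tanh_real v(2) v_def[symmetric]
    by (simp add: divide_le_eq add_pos_pos power2_eq_square algebra_simps)
qed

lemma one_minus_tanh_add_reflection_le: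
  fixes a t :: real
  assumes "(a - 1) * (a - exp (- 2 * t)) \<le> 0"
  shows "(1 - tanh t) + a\<^sup>2 * (1 + tanh t) \<le> 2 * a"
proof -
  define u where "u = exp (- 2 * t)"
  have "1 + u > 0" by (simp add: u_def add_pos_pos)
  have "(1 - tanh t) + a\<^sup>2 * (1 + tanh t) - 2 * a = 2 * ((a - 1) * (a - u)) / (1 + u)"
    unfolding one_minus_tanh_real one_plus_tanh_real u_def[symmetric] using \<open>1 + u > 0\<close>
    by (simp add: divide_simps) (simp add: power2_eq_square algebra_simps)
  also have "\<dots> \<le> 0"
    using assms \<open>1 + u > 0\<close> by (simp add: u_def divide_nonpos_pos)
  finally show ?thesis by simp
qed

lemma normal_density_mult_exp:
  assumes "\<sigma> > 0"
  shows "normal_density \<mu> \<sigma> x * exp (- k * x)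
     = exp (- k * \<mu> + k\<^sup>2 * \<sigma>\<^sup>2 / 2) * normal_density (\<mu> - k * \<sigma>\<^sup>2) \<sigma> x"
proof -
  have "- (x - \<mu>)\<^sup>2 / (2 * \<sigma>\<^sup>2) + - k * x
      = - k * \<mu> + k\<^sup>2 * \<sigma>\<^sup>2 / 2 + - (x - (\<mu> - k * \<sigma>\<^sup>2))\<^sup>2 / (2 * \<sigma>\<^sup>2)"
    using assms by (simp add: field_simps power2_eq_square)
  then show ?thesis unfolding normal_density_def
    by (simp add: exp_add[symmetric] mult_ac)
qed

lemma
  assumes "\<sigma> > 0"
  shows integrable_normal_density_mult_exp:
      "integrable lborel (\<lambda>x. normal_density \<mu> \<sigma> x * exp (- k * x))"
    and integral_normal_density_mult_exp:
      "(\<integral>x. normal_density \<mu> \<sigma> x * exp (- k * x) \<partial>lborel) = exp (- k * \<mu> + k\<^sup>2 * \<sigma>\<^sup>2 / 2)"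
  unfolding normal_density_mult_exp[OF assms] using assms by simp_all

lemma normal_density_uminus:
  assumes "\<sigma> > 0"
  shows "normal_density \<mu> \<sigma> (- x) = normal_density \<mu> \<sigma> x * exp (- 2 * (\<mu> / \<sigma>\<^sup>2) * x)"
proof -
  have "- (- x - \<mu>)\<^sup>2 / (2 * \<sigma>\<^sup>2) = - (x - \<mu>)\<^sup>2 / (2 * \<sigma>\<^sup>2) + - 2 * (\<mu> / \<sigma>\<^sup>2) * x"
    using assms by (simp add: field_simps power2_eq_square)
  then show ?thesis unfolding normal_density_def
    by (simp add: exp_add[symmetric] mult_ac)
qed

lemma integrable_normal_density_mult_bounded:
  fixes g :: "real \<Rightarrow> real"
  assumes "\<sigma> > 0" and [measurable]: "g \<in> borel_measurable borel" and "\<And>x. \<bar>g x\<bar> \<le> B"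
  shows "integrable lborel (\<lambda>x. normal_density \<mu> \<sigma> x * g x)"
proof -
  interpret N: prob_space "density lborel (normal_density \<mu> \<sigma>)"
    using assms(1) by (rule prob_space_normal_density)
  have "integrable (density lborel (normal_density \<mu> \<sigma>)) g"
    using assms(3) by (intro N.integrable_const_bound[where B = B]) auto
  then show ?thesis
    by (subst (asm) integrable_density) (auto simp: normal_density_nonneg)
qed

lemma borel_measurable_tanh_real [measurable]: "(tanh :: real \<Rightarrow> real) \<in> borel_measurable borel"
  by (intro borel_measurable_continuous_onI continuous_intros) (simp add: cosh_real_pos)

lemma
  assumes "\<sigma> > 0"
  shows integrable_normal_density_mult_tanh:
      "integrable lborel (\<lambda>x. normal_density \<mu> \<sigma> x * tanh (c * x))"
    and integrable_normal_density_mult_one_minus_tanh: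
      "integrable lborel (\<lambda>x. normal_density \<mu> \<sigma> x * (1 - tanh (c * x)))"
proof -
  have "\<bar>tanh (c * x)\<bar> \<le> 2" "\<bar>1 - tanh (c * x)\<bar> \<le> 2" for x
    using tanh_real_bounds[of "c * x"] by auto
  with assms show "integrable lborel (\<lambda>x. normal_density \<mu> \<sigma> x * tanh (c * x))"
    and "integrable lborel (\<lambda>x. normal_density \<mu> \<sigma> x * (1 - tanh (c * x)))"
    by (auto intro!: integrable_normal_density_mult_bounded)
qed

lemma normal_integral_one_minus_tanh:
  assumes "\<sigma> > 0"
  shows "(\<integral>x. normal_density \<mu> \<sigma> x * (1 - tanh (c * x)) \<partial>lborel)
       = 1 - (\<integral>x. normal_density \<mu> \<sigma> x * tanh (c * x) \<partial>lborel)"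
proof -
  have "(\<integral>x. normal_density \<mu> \<sigma> x * (1 - tanh (c * x)) \<partial>lborel)
      = (\<integral>x. normal_density \<mu> \<sigma> x - normal_density \<mu> \<sigma> x * tanh (c * x) \<partial>lborel)"
    by (simp add: algebra_simps)
  also have "\<dots> = 1 - (\<integral>x. normal_density \<mu> \<sigma> x * tanh (c * x) \<partial>lborel)"
    using assms integrable_normal_density_mult_tanh[OF assms]
    by (subst Bochner_Integration.integral_diff) auto
  finally show ?thesis .
qed

lemma normal_integral_tanh_ge_mgf:
  assumes "\<sigma> > 0"
  shows "1 - exp (- c * \<mu> + c\<^sup>2 * \<sigma>\<^sup>2 / 2) \<le> (\<integral>x. normal_density \<mu> \<sigma> x * tanh (c * x) \<partial>lborel)"
proof -
  have "(\<integral>x. normal_density \<mu> \<sigma> x * (1 - tanh (c * x)) \<partial>lborel)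
      \<le> (\<integral>x. normal_density \<mu> \<sigma> x * exp (- c * x) \<partial>lborel)"
    using one_minus_tanh_le_exp[of "c * x" for x]
    by (intro integral_mono integrable_normal_density_mult_one_minus_tanh
        integrable_normal_density_mult_exp assms mult_left_mono) (simp_all add: normal_density_nonneg)
  then show ?thesis
    using normal_integral_one_minus_tanh[OF assms] integral_normal_density_mult_exp[OF assms]
    by simp
qed

lemma exp_between_one_and_exp:
  fixes r c x :: real
  assumes "0 \<le> r" and "r \<le> 2 * c"
  shows "(exp (- r * x) - 1) * (exp (- r * x) - exp (- 2 * (c * x))) \<le> 0"
proof (cases "x \<ge> 0")
  case True
  then have "r * x \<le> 2 * c * x" using assms(2) by (rule mult_right_mono[rotated])
  then have "- r * x \<le> 0" and "- 2 * (c * x) \<le> - r * x"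
    using assms(1) True by simp_all
  then show ?thesis by (intro mult_nonpos_nonneg) simp_all
next
  case False
  then have "2 * c * x \<le> r * x" using assms(2) by (intro mult_right_mono_neg) simp_all
  then have "0 \<le> - r * x" and "- r * x \<le> - 2 * (c * x)"
    using assms(1) False by (simp_all add: mult_nonneg_nonpos)
  then show ?thesis by (intro mult_nonneg_nonpos) simp_all
qed

lemma normal_integral_tanh_ge_reflection:
  assumes "\<sigma> > 0" and "0 \<le> \<mu>" and "\<mu> \<le> 2 * c * \<sigma>\<^sup>2"
  shows "1 - exp (- \<mu>\<^sup>2 / (2 * \<sigma>\<^sup>2)) \<le> (\<integral>x. normal_density \<mu> \<sigma> x * tanh (c * x) \<partial>lborel)"
proof -
  define r where "r = \<mu> / \<sigma>\<^sup>2"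
  define D where "D x = normal_density \<mu> \<sigma> x * (1 - tanh (c * x))" for x
  have r: "0 \<le> r" "r \<le> 2 * c"
    using assms by (simp_all add: r_def divide_le_eq)
  have D: "integrable lborel D"
    unfolding D_def by (rule integrable_normal_density_mult_one_minus_tanh[OF assms(1)])
  have D_uminus: "integrable lborel (\<lambda>x. D (- x))"
    using lborel_integrable_real_affine[OF D, of "-1" 0] by simp
  have pair_le: "D x + D (- x) \<le> 2 * (normal_density \<mu> \<sigma> x * exp (- r * x))" for x
  proof -
    have "(exp (- r * x))\<^sup>2 = exp (- 2 * r * x)"
      by (simp add: power2_eq_square exp_add[symmetric])
    then have "D x + D (- x) = normal_density \<mu> \<sigma> x
        * ((1 - tanh (c * x)) + (exp (- r * x))\<^sup>2 * (1 + tanh (c * x)))"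
      unfolding D_def normal_density_uminus[OF assms(1)] r_def by (simp add: algebra_simps)
    also have "\<dots> \<le> normal_density \<mu> \<sigma> x * (2 * exp (- r * x))"
      using exp_between_one_and_exp[OF r]
      by (intro mult_left_mono one_minus_tanh_add_reflection_le) (simp_all add: normal_density_nonneg)
    finally show ?thesis by simp
  qed
  have "2 * (\<integral>x. D x \<partial>lborel) = (\<integral>x. D x + D (- x) \<partial>lborel)"
    using lborel_integral_real_affine[of "-1" D 0] D D_uminus by simp
  also have "\<dots> \<le> (\<integral>x. 2 * (normal_density \<mu> \<sigma> x * exp (- r * x)) \<partial>lborel)"
    using D D_uminus integrable_normal_density_mult_exp[OF assms(1)] pair_le
    by (intro integral_mono) auto
  also have "\<dots> = 2 * exp (- r * \<mu> + r\<^sup>2 * \<sigma>\<^sup>2 / 2)"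
    using integral_normal_density_mult_exp[OF assms(1)] by simp
  also have "- r * \<mu> + r\<^sup>2 * \<sigma>\<^sup>2 / 2 = - \<mu>\<^sup>2 / (2 * \<sigma>\<^sup>2)"
    using assms(1) by (simp add: r_def field_simps power2_eq_square)
  finally show ?thesis
    using normal_integral_one_minus_tanh[OF assms(1)] by (simp add: D_def)
qed

theorem lemma2:
  fixes M :: "'a measure" and X :: "'a \<Rightarrow> real" and \<alpha> \<beta> \<sigma> :: real
  assumes "prob_space M"
    and "distributed M lborel X (normal_density \<alpha> \<sigma>)"
    and "\<alpha> > 0" and "\<beta> > 0" and "\<sigma> > 0"
  shows "prob_space.expectation M (\<lambda>\<omega>. tanh (\<beta> * X \<omega> / \<sigma>\<^sup>2))
           \<ge> 1 - exp (- (min \<alpha> \<beta> * \<alpha>) / (2 * \<sigma>\<^sup>2))"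
proof -
  interpret prob_space M by (fact assms(1))
  define c where "c = \<beta> / \<sigma>\<^sup>2"
  have "expectation (\<lambda>\<omega>. tanh (\<beta> * X \<omega> / \<sigma>\<^sup>2))
      = (\<integral>x. normal_density \<alpha> \<sigma> x * tanh (c * x) \<partial>lborel)"
    using distributed_integral[OF assms(2), of "\<lambda>x. tanh (c * x)"]
    by (simp add: c_def normal_density_nonneg)
  moreover have "1 - exp (- (min \<alpha> \<beta> * \<alpha>) / (2 * \<sigma>\<^sup>2))
      \<le> (\<integral>x. normal_density \<alpha> \<sigma> x * tanh (c * x) \<partial>lborel)"
  proof (cases "\<beta> \<le> \<alpha>")
    case True
    have "\<beta> * \<beta> * \<sigma>\<^sup>2 \<le> \<beta> * \<alpha> * \<sigma>\<^sup>2" using True assms(4) by (simp add: mult_right_mono)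
    then have "- c * \<alpha> + c\<^sup>2 * \<sigma>\<^sup>2 / 2 \<le> - (min \<alpha> \<beta> * \<alpha>) / (2 * \<sigma>\<^sup>2)"
      using True assms(5) by (simp add: c_def field_simps power2_eq_square)
    then have "exp (- c * \<alpha> + c\<^sup>2 * \<sigma>\<^sup>2 / 2) \<le> exp (- (min \<alpha> \<beta> * \<alpha>) / (2 * \<sigma>\<^sup>2))"
      by (rule exp_mono)
    then show ?thesis
      using normal_integral_tanh_ge_mgf[OF assms(5), of c \<alpha>] by linarith
  next
    case False
    then have "\<alpha> \<le> 2 * c * \<sigma>\<^sup>2" using assms(4,5) by (simp add: c_def)
    then show ?thesis
      using normal_integral_tanh_ge_reflection[OF assms(5)] False assms(3)
      by (simp add: power2_eq_square)
  qed
  ultimately show ?thesis by simp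
qed

end
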